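(* Let $f:\mathbb{R}^d\to\mathbb{R}$ be differentiable with $f$ and $\nabla f$ both Lipschitz, and suppose $f\ge c$ everywhere for some $c\in(0,1]$. Let $L$ be the maximum of the Lipschitz constants of $f$ and $\nabla f$. Then the Föllmer drift $b(x,t)=\nabla\log Q_{1-t}f(x)$, $x\in\mathbb{R}^d$, $t\in[0,1]$, satisfies $\|b(x,t)\|\le L/c$ for all $x,t$, and $\|b(x,t)-b(x',t)\|\le (L/c+L^2/c^2)\|x-x'\|$ for all $x,x'\in\mathbb{R}^d$, $t\in[0,1]$.
   Context: $Q_t$ is the Euclidean heat semigroup: $Q_tf(x)=\mathbf{E}[f(x+\sqrt tZ)]$ with $Z$ a standard Gaussian vector in $\mathbb{R}^d$; the gradient is in $x$. *)

theory Defs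
  imports "HOL-Analysis.Analysis"
begin

definition std_gaussian :: "'a::euclidean_space measure" where
  "std_gaussian = density lborel
     (\<lambda>z. ennreal ((2 * pi) powr (- real DIM('a) / 2) * exp (- (norm z ^ 2) / 2)))"

definition heat_sg :: "real \<Rightarrow> ('a::euclidean_space \<Rightarrow> real) \<Rightarrow> 'a \<Rightarrow> real" where
  "heat_sg t f x = (\<integral>z. f (x + sqrt t *\<^sub>R z) \<partial>std_gaussian)"

definition grad :: "('a::euclidean_space \<Rightarrow> real) \<Rightarrow> 'a \<Rightarrow> 'a" where
  "grad g x = (SOME v. (g has_derivative (\<lambda>h. v \<bullet> h)) (at x))"

definition foellmer_drift :: "('a::euclidean_space \<Rightarrow> real) \<Rightarrow> 'a \<Rightarrow> real \<Rightarrow> 'a" where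
  "foellmer_drift f x t = grad (\<lambda>y. ln (heat_sg (1 - t) f y)) x"

end

theory Submission
  imports Defs "HOL-Probability.Probability"
begin

(* Write A = Q_(1-t) f and V = Q_(1-t) (grad f). Since the linearization error of f is quadratic
   with constant L2, uniformly in the point, one may differentiate under the Gaussian integral:
   grad A = V, so the drift is V / A. Gaussian averaging preserves Lipschitz constants and pointwise
   bounds, hence A >= c is L1-Lipschitz and V is L2-Lipschitz with |V| <= L1 (a Lipschitz constant of
   f bounds its gradient). Then |V / A| <= L1 / c, and the splitting
   V/A - V'/A' = (V - V')/A + (A' - A) V' / (A A') gives the Lipschitz constant L2/c + L1^2/c^2. *)

lemma grad_eqI:
  assumes "(g has_derivative (\<lambda>h. v \<bullet> h)) (at x)"
  shows "grad g x = v"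
proof -
  have "(g has_derivative (\<lambda>h. grad g x \<bullet> h)) (at x)"
    unfolding grad_def using assms by (rule someI)
  then have "(\<lambda>h. grad g x \<bullet> h) = (\<lambda>h. v \<bullet> h)"
    using assms by (rule has_derivative_unique)
  then show ?thesis
    by (metis euclidean_eqI)
qed

lemma lipschitz_on_has_derivative_norm_le:
  fixes g :: "'a::real_inner \<Rightarrow> real"
  assumes g': "(g has_derivative (\<lambda>h. v \<bullet> h)) (at y)" and g: "L-lipschitz_on UNIV g"
  shows "norm v \<le> L"
proof -
  let ?\<phi> = "\<lambda>\<tau>::real. g (y + \<tau> *\<^sub>R v)"
  have "((\<lambda>\<tau>::real. y + \<tau> *\<^sub>R v) has_derivative (\<lambda>\<tau>. \<tau> *\<^sub>R v)) (at 0)"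
    by (auto intro!: derivative_eq_intros)
  moreover have "(g has_derivative (\<lambda>h. v \<bullet> h)) (at (y + 0 *\<^sub>R v))"
    using g' by simp
  ultimately have "(?\<phi> has_derivative (\<lambda>\<tau>. v \<bullet> (\<tau> *\<^sub>R v))) (at 0)"
    by (rule has_derivative_compose)
  moreover have "(\<lambda>\<tau>. v \<bullet> (\<tau> *\<^sub>R v)) = (*) (v \<bullet> v)"
    by (simp add: fun_eq_iff mult.commute)
  ultimately have "(?\<phi> has_real_derivative v \<bullet> v) (at 0)"
    by (simp add: has_field_derivative_def)
  then have slope: "((\<lambda>\<tau>. (?\<phi> \<tau> - ?\<phi> 0) / \<tau>) \<longlongrightarrow> v \<bullet> v) (at 0)"
    by (simp add: DERIV_def)
  have "(?\<phi> \<tau> - ?\<phi> 0) / \<tau> \<le> L * norm v" if "\<tau> \<noteq> 0" for \<tau>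
  proof -
    have "(?\<phi> \<tau> - ?\<phi> 0) / \<tau> \<le> \<bar>?\<phi> \<tau> - ?\<phi> 0\<bar> / \<bar>\<tau>\<bar>"
      using abs_ge_self[of "(?\<phi> \<tau> - ?\<phi> 0) / \<tau>"] by simp
    also have "\<dots> \<le> L * norm v"
      using lipschitz_on_normD[OF g, of "y + \<tau> *\<^sub>R v" y] that
      by (simp add: divide_le_eq mult_ac)
    finally show ?thesis .
  qed
  then have "v \<bullet> v \<le> L * norm v"
    by (intro tendsto_le[OF _ tendsto_const slope]) (auto simp: eventually_at_filter)
  then have "norm v * norm v \<le> L * norm v"
    by (simp add: power2_eq_square[symmetric] power2_norm_eq_inner)
  then show ?thesis
    using lipschitz_on_nonneg[OF g] by (cases "v = 0") auto
qed

lemma lipschitz_gradient_linearization_error: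
  fixes g :: "'a::real_inner \<Rightarrow> real"
  assumes g': "\<And>x. (g has_derivative (\<lambda>h. g' x \<bullet> h)) (at x)"
    and g'_lip: "L-lipschitz_on UNIV g'"
  shows "\<bar>g b - g a - g' a \<bullet> (b - a)\<bar> \<le> L * norm (b - a) ^ 2"
proof -
  let ?S = "cball a (norm (b - a))"
  have "norm (g b - g a - g' a \<bullet> (b - a)) \<le> norm (b - a) * (L * norm (b - a))"
  proof (rule differentiable_bound_linearization[where S = ?S and f' = "\<lambda>x h. g' x \<bullet> h"])
    show "a + t *\<^sub>R (b - a) \<in> ?S" if "t \<in> {0..1}" for t
      using that by (simp add: dist_norm mult_left_le_one_le)
    show "(g has_derivative (\<lambda>h. g' x \<bullet> h)) (at x within ?S)" for x
      using g' by (rule has_derivative_at_withinI)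
    show "onorm ((\<lambda>h. g' x \<bullet> h) - (\<lambda>h. g' a \<bullet> h)) \<le> L * norm (b - a)" if "x \<in> ?S" for x
    proof (rule onorm_bound)
      have "norm (x - a) \<le> norm (b - a)"
        using that by (simp add: dist_norm norm_minus_commute)
      then have "L * norm (x - a) \<le> L * norm (b - a)"
        using lipschitz_on_nonneg[OF g'_lip] by (rule mult_left_mono)
      then have dist_g': "norm (g' x - g' a) \<le> L * norm (b - a)"
        using lipschitz_on_normD[OF g'_lip, of x a] by simp
      fix h
      have "norm (((\<lambda>h. g' x \<bullet> h) - (\<lambda>h. g' a \<bullet> h)) h) = \<bar>(g' x - g' a) \<bullet> h\<bar>"
        by (simp add: inner_diff_left)
      also have "\<dots> \<le> norm (g' x - g' a) * norm h"
        by (rule Cauchy_Schwarz_ineq2)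
      also have "\<dots> \<le> L * norm (b - a) * norm h"
        using dist_g' by (rule mult_right_mono) simp
      finally show "norm (((\<lambda>h. g' x \<bullet> h) - (\<lambda>h. g' a \<bullet> h)) h) \<le> L * norm (b - a) * norm h" .
    qed (use lipschitz_on_nonneg[OF g'_lip] in simp)
  qed simp
  then show ?thesis
    by (simp add: power2_eq_square mult_ac)
qed

lemma has_derivative_at_quadratic_remainder:
  assumes D: "bounded_linear D"
    and remainder: "\<And>y. norm (F y - F x - D (y - x)) \<le> C * norm (y - x) ^ 2"
  shows "(F has_derivative D) (at x)"
  unfolding has_derivative_at_alt
proof (intro conjI allI impI D)
  fix e :: real
  assume e: "0 < e"
  show "\<exists>d>0. \<forall>y. norm (y - x) < d \<longrightarrow> norm (F y - F x - D (y - x)) \<le> e * norm (y - x)"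
  proof (intro exI[of _ "e / (\<bar>C\<bar> + 1)"] conjI allI impI)
    fix y
    assume y: "norm (y - x) < e / (\<bar>C\<bar> + 1)"
    have "C * norm (y - x) ^ 2 \<le> ((\<bar>C\<bar> + 1) * norm (y - x)) * norm (y - x)"
      using mult_right_mono[of C "\<bar>C\<bar> + 1" "norm (y - x) ^ 2"] by (simp add: power2_eq_square mult_ac)
    also have "\<dots> \<le> e * norm (y - x)"
      using y by (intro mult_right_mono) (simp_all add: field_simps)
    finally show "norm (F y - F x - D (y - x)) \<le> e * norm (y - x)"
      using remainder[of y] by linarith
  qed (use e in simp)
qed

lemma lipschitz_on_inverse_scaleR:
  fixes a :: "'a::metric_space \<Rightarrow> real" and v :: "'a \<Rightarrow> 'b::real_normed_vector"
  assumes a: "La-lipschitz_on S a" and v: "Lv-lipschitz_on S v"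
    and c: "0 < c" "\<And>x. x \<in> S \<Longrightarrow> c \<le> a x"
    and B: "0 \<le> B" "\<And>x. x \<in> S \<Longrightarrow> norm (v x) \<le> B"
  shows "(Lv / c + B * La / c\<^sup>2)-lipschitz_on S (\<lambda>x. inverse (a x) *\<^sub>R v x)"
proof (rule lipschitz_onI)
  fix x y
  assume xy: "x \<in> S" "y \<in> S"
  have pos: "0 < a x" "0 < a y"
    using c xy by (auto intro: less_le_trans)
  have "inverse (a x) *\<^sub>R v x - inverse (a y) *\<^sub>R v y
      = inverse (a x) *\<^sub>R (v x - v y) + (inverse (a x) - inverse (a y)) *\<^sub>R v y"
    by (simp add: algebra_simps)
  also have "inverse (a x) - inverse (a y) = (a y - a x) / (a x * a y)"
    using pos by (simp add: field_simps)
  finally have split: "inverse (a x) *\<^sub>R v x - inverse (a y) *\<^sub>R v y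
      = inverse (a x) *\<^sub>R (v x - v y) + ((a y - a x) / (a x * a y)) *\<^sub>R v y" .
  have "norm (inverse (a x) *\<^sub>R (v x - v y)) = norm (v x - v y) / a x"
    using pos by (simp add: divide_inverse mult.commute)
  also have "\<dots> \<le> Lv * dist x y / c"
    using lipschitz_onD[OF v xy] lipschitz_on_nonneg[OF v] c xy by (intro frac_le) (auto simp: dist_norm)
  finally have first: "norm (inverse (a x) *\<^sub>R (v x - v y)) \<le> Lv / c * dist x y"
    by simp
  have "norm (((a y - a x) / (a x * a y)) *\<^sub>R v y) = \<bar>a y - a x\<bar> * norm (v y) / (a x * a y)"
    using pos by simp
  also have "\<dots> \<le> La * dist x y * B / (c * c)"
    using lipschitz_onD[OF a xy] c xy B pos lipschitz_on_nonneg[OF a]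
    by (intro frac_le mult_mono) (auto simp: dist_real_def abs_minus_commute)
  finally have second: "norm (((a y - a x) / (a x * a y)) *\<^sub>R v y) \<le> B * La / c\<^sup>2 * dist x y"
    by (simp add: power2_eq_square mult_ac)
  show "dist (inverse (a x) *\<^sub>R v x) (inverse (a y) *\<^sub>R v y) \<le> (Lv / c + B * La / c\<^sup>2) * dist x y"
    unfolding dist_norm split using norm_triangle_le[OF add_mono[OF first second]]
    by (simp add: distrib_right)
next
  show "0 \<le> Lv / c + B * La / c\<^sup>2"
    using lipschitz_on_nonneg[OF a] lipschitz_on_nonneg[OF v] c B by simp
qed

lemma nn_integral_lborel_exp_norm_square:
  fixes s :: real
  assumes "0 < s"
  shows "(\<integral>\<^sup>+z. ennreal (exp (- (norm (z::'a::euclidean_space) ^ 2) / (2 * s\<^sup>2))) \<partial>lborel)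
     = ennreal (sqrt (2 * pi * s\<^sup>2) ^ DIM('a))"
proof -
  let ?k = "\<lambda>t::real. ennreal (exp (- (t ^ 2) / (2 * s\<^sup>2)))"
  have one_dim: "(\<integral>\<^sup>+t. ?k t \<partial>lborel) = ennreal (sqrt (2 * pi * s\<^sup>2))"
  proof -
    have "\<And>t. exp (- (t ^ 2) / (2 * s\<^sup>2)) = sqrt (2 * pi * s\<^sup>2) * normal_density 0 s t"
      using assms by (simp add: normal_density_def)
    then have "(\<integral>\<^sup>+t. ?k t \<partial>lborel) = (\<integral>\<^sup>+t. ennreal (sqrt (2 * pi * s\<^sup>2) * normal_density 0 s t) \<partial>lborel)"
      by simp
    also have "\<dots> = ennreal (\<integral>t. sqrt (2 * pi * s\<^sup>2) * normal_density 0 s t \<partial>lborel)"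
      using assms by (intro nn_integral_eq_integral integrable_mult_right) auto
    also have "\<dots> = ennreal (sqrt (2 * pi * s\<^sup>2))"
      using assms by simp
    finally show ?thesis .
  qed
  have "ennreal (exp (- (norm z ^ 2) / (2 * s\<^sup>2))) = (\<Prod>b\<in>Basis. ?k (z \<bullet> b))" for z :: 'a
  proof -
    have "norm z ^ 2 = (\<Sum>b\<in>Basis. (z \<bullet> b) ^ 2)"
      unfolding power2_norm_eq_inner by (subst euclidean_inner) (simp add: power2_eq_square)
    then have "exp (- (norm z ^ 2) / (2 * s\<^sup>2)) = (\<Prod>b\<in>Basis. exp (- ((z \<bullet> b) ^ 2) / (2 * s\<^sup>2)))"
      by (simp add: exp_sum sum_divide_distrib sum_negf[symmetric])
    then show ?thesis
      by (simp add: prod_ennreal)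
  qed
  then have "(\<integral>\<^sup>+z. ennreal (exp (- (norm (z::'a) ^ 2) / (2 * s\<^sup>2))) \<partial>lborel)
      = (\<integral>\<^sup>+z. (\<Prod>b\<in>Basis. ?k ((z::'a) \<bullet> b)) \<partial>lborel)"
    by simp
  also have "\<dots> = (\<Prod>b\<in>(Basis::'a set). \<integral>\<^sup>+t. ?k t \<partial>lborel)"
    by (rule nn_integral_lborel_prod) auto
  also have "\<dots> = ennreal (sqrt (2 * pi * s\<^sup>2) ^ DIM('a))"
    unfolding prod_constant one_dim by (simp add: ennreal_power)
  finally show ?thesis .
qed

lemma sets_std_gaussian [simp]: "sets std_gaussian = sets borel"
  and space_std_gaussian [simp]: "space std_gaussian = UNIV"
  by (simp_all add: std_gaussian_def)

lemma emeasure_std_gaussian_UNIV: "emeasure (std_gaussian :: 'a::euclidean_space measure) UNIV = 1"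
proof -
  let ?k = "(2 * pi) powr (- real DIM('a) / 2)"
  have norming: "?k * sqrt (2 * pi) ^ DIM('a) = 1"
    by (simp add: powr_half_sqrt[symmetric] powr_power powr_add[symmetric])
  have "emeasure (std_gaussian :: 'a measure) UNIV
      = ennreal ?k * (\<integral>\<^sup>+z. ennreal (exp (- (norm (z::'a) ^ 2) / (2 * 1\<^sup>2))) \<partial>lborel)"
    unfolding std_gaussian_def
    by (simp add: emeasure_density ennreal_mult nn_integral_cmult)
  also have "\<dots> = 1"
    using norming by (subst nn_integral_lborel_exp_norm_square) (simp_all add: ennreal_mult[symmetric])
  finally show ?thesis .
qed

lemma prob_space_std_gaussian: "prob_space std_gaussian"
  by standard (simp add: emeasure_std_gaussian_UNIV)

lemma borel_measurable_std_gaussian_continuous: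
  "continuous_on UNIV g \<Longrightarrow> g \<in> borel_measurable std_gaussian"
  by (simp add: measurable_cong_sets[OF sets_std_gaussian refl] borel_measurable_continuous_onI)

lemma integrable_std_gaussian_norm: "integrable std_gaussian (\<lambda>z::'a::euclidean_space. norm z)"
proof (rule integrableI_nonneg)
  let ?k = "(2 * pi) powr (- real DIM('a) / 2)"
  \<comment> \<open>The first moment is dominated by a Gaussian kernel of variance 2.\<close>
  have tail: "r * exp (- (r\<^sup>2) / 2) \<le> exp (- (r\<^sup>2) / (2 * (sqrt 2)\<^sup>2))" for r :: real
  proof -
    have "r \<le> 1 + r\<^sup>2 / 4"
      using sum_power2_ge_zero[of "1 - r/2" 0] by (simp add: power2_eq_square algebra_simps)
    also have "\<dots> \<le> exp (r\<^sup>2 / 4)"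
      by (rule exp_ge_add_one_self)
    finally have "r * exp (- (r\<^sup>2) / 2) \<le> exp (r\<^sup>2 / 4) * exp (- (r\<^sup>2) / 2)"
      by (rule mult_right_mono) simp
    also have "\<dots> = exp (- (r\<^sup>2) / (2 * (sqrt 2)\<^sup>2))"
      by (simp add: exp_add[symmetric])
    finally show ?thesis .
  qed
  have "(\<integral>\<^sup>+z. ennreal (norm z) \<partial>(std_gaussian :: 'a measure))
      = (\<integral>\<^sup>+z. ennreal (?k * (norm (z::'a) * exp (- ((norm z)\<^sup>2) / 2))) \<partial>lborel)"
    unfolding std_gaussian_def
    by (subst nn_integral_density) (auto simp: ennreal_mult[symmetric] mult_ac)
  also have "\<dots> \<le> (\<integral>\<^sup>+z. ennreal ?k * ennreal (exp (- ((norm (z::'a))\<^sup>2) / (2 * (sqrt 2)\<^sup>2))) \<partial>lborel)"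
    using tail by (intro nn_integral_mono) (simp add: ennreal_mult[symmetric] ennreal_leI)
  also have "\<dots> = ennreal ?k * (\<integral>\<^sup>+z. ennreal (exp (- ((norm (z::'a))\<^sup>2) / (2 * (sqrt 2)\<^sup>2))) \<partial>lborel)"
    by (rule nn_integral_cmult) simp
  also have "\<dots> = ennreal ?k * ennreal (sqrt (2 * pi * (sqrt 2)\<^sup>2) ^ DIM('a))"
    by (subst nn_integral_lborel_exp_norm_square) simp_all
  also have "\<dots> < \<infinity>"
    by (simp add: ennreal_mult[symmetric])
  finally show "(\<integral>\<^sup>+z. ennreal (norm z) \<partial>(std_gaussian :: 'a measure)) < \<infinity>" .
qed (auto intro: borel_measurable_std_gaussian_continuous continuous_intros)

lemma integrable_std_gaussian_lipschitz:
  fixes g :: "'a::euclidean_space \<Rightarrow> 'b::{banach, second_countable_topology}"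
  assumes g: "K-lipschitz_on UNIV g"
  shows "integrable std_gaussian (\<lambda>z. g (x + r *\<^sub>R z))"
proof -
  interpret prob_space "std_gaussian :: 'a measure"
    by (rule prob_space_std_gaussian)
  have K: "0 \<le> K"
    using g by (rule lipschitz_on_nonneg)
  have bound: "norm (g (x + r *\<^sub>R z)) \<le> norm (g 0) + K * norm x + K * \<bar>r\<bar> * norm z" for z
  proof -
    have "norm (g (x + r *\<^sub>R z)) - norm (g 0) \<le> K * norm (x + r *\<^sub>R z)"
      using lipschitz_on_normD[OF g, of "x + r *\<^sub>R z" 0] norm_triangle_ineq2[of "g (x + r *\<^sub>R z)" "g 0"]
      by simp
    also have "\<dots> \<le> K * (norm x + \<bar>r\<bar> * norm z)"
      using K norm_triangle_ineq[of x "r *\<^sub>R z"] by (intro mult_left_mono) auto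
    finally show ?thesis
      by (simp add: algebra_simps)
  qed
  have "continuous_on UNIV (\<lambda>z. g (x + r *\<^sub>R z))"
    by (intro continuous_on_compose2[OF lipschitz_on_continuous_on[OF g]] continuous_intros) auto
  then show ?thesis
  proof (rule Bochner_Integration.integrable_bound[rotated, OF borel_measurable_std_gaussian_continuous])
    show "integrable std_gaussian (\<lambda>z::'a. norm (g 0) + K * norm x + K * \<bar>r\<bar> * norm z)"
      by (intro Bochner_Integration.integrable_add integrable_mult_right integrable_std_gaussian_norm) auto
    show "AE z in std_gaussian. norm (g (x + r *\<^sub>R z)) \<le> norm (norm (g 0) + K * norm x + K * \<bar>r\<bar> * norm z)"
      using bound by (intro AE_I2) (smt (verit) real_norm_def)
  qed
qed

lemma norm_integral_std_gaussian_le: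
  fixes g :: "'a::euclidean_space \<Rightarrow> 'b::{banach, second_countable_topology}"
  assumes "integrable std_gaussian g" and "\<And>z. norm (g z) \<le> B"
  shows "norm (integral\<^sup>L std_gaussian g) \<le> B"
proof -
  interpret prob_space "std_gaussian :: 'a measure"
    by (rule prob_space_std_gaussian)
  have "norm (integral\<^sup>L std_gaussian g) \<le> (\<integral>z. norm (g z) \<partial>std_gaussian)"
    by (rule integral_norm_bound)
  also have "\<dots> \<le> B"
    using assms by (intro integral_le_const) auto
  finally show ?thesis .
qed

lemma lipschitz_on_gaussian_average:
  fixes g :: "'a::euclidean_space \<Rightarrow> 'b::{banach, second_countable_topology}"
  assumes g: "K-lipschitz_on UNIV g"
  shows "K-lipschitz_on UNIV (\<lambda>x. \<integral>z. g (x + r *\<^sub>R z) \<partial>std_gaussian)"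
proof (rule lipschitz_onI)
  fix x y :: 'a
  have "dist (\<integral>z. g (x + r *\<^sub>R z) \<partial>std_gaussian) (\<integral>z. g (y + r *\<^sub>R z) \<partial>std_gaussian)
      = norm (\<integral>z. g (x + r *\<^sub>R z) - g (y + r *\<^sub>R z) \<partial>std_gaussian)"
    by (simp add: dist_norm integrable_std_gaussian_lipschitz[OF g])
  also have "\<dots> \<le> K * dist x y"
  proof (rule norm_integral_std_gaussian_le)
    show "norm (g (x + r *\<^sub>R z) - g (y + r *\<^sub>R z)) \<le> K * dist x y" for z
      using lipschitz_on_normD[OF g, of "x + r *\<^sub>R z" "y + r *\<^sub>R z"] by (simp add: dist_norm)
  qed (intro Bochner_Integration.integrable_diff integrable_std_gaussian_lipschitz[OF g])
  finally show "dist (\<integral>z. g (x + r *\<^sub>R z) \<partial>std_gaussian) (\<integral>z. g (y + r *\<^sub>R z) \<partial>std_gaussian) \<le> K * dist x y" .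
qed (rule lipschitz_on_nonneg[OF g])

lemma norm_gaussian_average_gradient_le:
  fixes f :: "'a::euclidean_space \<Rightarrow> real"
  assumes f': "\<And>x. (f has_derivative (\<lambda>h. f' x \<bullet> h)) (at x)"
    and f_lip: "K-lipschitz_on UNIV f" and f'_lip: "L-lipschitz_on UNIV f'"
  shows "norm (\<integral>z. f' (x + r *\<^sub>R z) \<partial>std_gaussian) \<le> K"
  by (intro norm_integral_std_gaussian_le integrable_std_gaussian_lipschitz[OF f'_lip]
      lipschitz_on_has_derivative_norm_le[OF f' f_lip])

lemma heat_sg_ge:
  assumes "K-lipschitz_on UNIV f" and "\<And>x. c \<le> f x"
  shows "c \<le> heat_sg t f x"
proof -
  interpret prob_space "std_gaussian :: 'a::euclidean_space measure"
    by (rule prob_space_std_gaussian)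
  show ?thesis
    unfolding heat_sg_def using assms
    by (intro integral_ge_const integrable_std_gaussian_lipschitz AE_I2)
qed

lemma has_derivative_gaussian_average:
  fixes g :: "'a::euclidean_space \<Rightarrow> real"
  assumes g': "\<And>x. (g has_derivative (\<lambda>h. g' x \<bullet> h)) (at x)"
    and g_lip: "K-lipschitz_on UNIV g" and g'_lip: "L-lipschitz_on UNIV g'"
  shows "((\<lambda>y. \<integral>z. g (y + r *\<^sub>R z) \<partial>std_gaussian)
          has_derivative (\<lambda>h. (\<integral>z. g' (x + r *\<^sub>R z) \<partial>std_gaussian) \<bullet> h)) (at x)"
proof (rule has_derivative_at_quadratic_remainder[where C = L])
  fix y :: 'a
  note integrable = integrable_std_gaussian_lipschitz[OF g_lip] integrable_std_gaussian_lipschitz[OF g'_lip]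
  have "(\<integral>z. g (y + r *\<^sub>R z) \<partial>std_gaussian) - (\<integral>z. g (x + r *\<^sub>R z) \<partial>std_gaussian)
          - (\<integral>z. g' (x + r *\<^sub>R z) \<partial>std_gaussian) \<bullet> (y - x)
      = (\<integral>z. g (y + r *\<^sub>R z) - g (x + r *\<^sub>R z) - g' (x + r *\<^sub>R z) \<bullet> (y - x) \<partial>std_gaussian)"
    by (simp add: integrable)
  also have "norm \<dots> \<le> L * norm (y - x) ^ 2"
  proof (rule norm_integral_std_gaussian_le)
    show "norm (g (y + r *\<^sub>R z) - g (x + r *\<^sub>R z) - g' (x + r *\<^sub>R z) \<bullet> (y - x)) \<le> L * norm (y - x) ^ 2" for z
      using lipschitz_gradient_linearization_error[OF g' g'_lip, of "y + r *\<^sub>R z" "x + r *\<^sub>R z"] by simp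
  qed (simp add: integrable)
  finally show "norm ((\<integral>z. g (y + r *\<^sub>R z) \<partial>std_gaussian) - (\<integral>z. g (x + r *\<^sub>R z) \<partial>std_gaussian)
          - (\<integral>z. g' (x + r *\<^sub>R z) \<partial>std_gaussian) \<bullet> (y - x)) \<le> L * norm (y - x) ^ 2" .
qed (rule bounded_linear_inner_right)

context
  fixes f :: "'a::euclidean_space \<Rightarrow> real" and f' :: "'a \<Rightarrow> 'a" and K L c :: real
  assumes f': "\<And>x. (f has_derivative (\<lambda>h. f' x \<bullet> h)) (at x)"
    and f_lip: "K-lipschitz_on UNIV f" and f'_lip: "L-lipschitz_on UNIV f'"
    and c_pos: "0 < c" and f_ge: "\<And>x. c \<le> f x"
begin

lemma foellmer_drift_eq:
  "foellmer_drift f x t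
    = inverse (heat_sg (1 - t) f x) *\<^sub>R (\<integral>z. f' (x + sqrt (1 - t) *\<^sub>R z) \<partial>std_gaussian)"
proof -
  let ?V = "\<integral>z. f' (x + sqrt (1 - t) *\<^sub>R z) \<partial>std_gaussian"
  have "0 < heat_sg (1 - t) f x"
    using less_le_trans[OF c_pos heat_sg_ge[OF f_lip f_ge]] .
  moreover have "(heat_sg (1 - t) f has_derivative (\<lambda>h. ?V \<bullet> h)) (at x)"
    unfolding heat_sg_def[abs_def] by (rule has_derivative_gaussian_average[OF f' f_lip f'_lip])
  ultimately have "((\<lambda>y. ln (heat_sg (1 - t) f y))
      has_derivative (\<lambda>h. (inverse (heat_sg (1 - t) f x) *\<^sub>R ?V) \<bullet> h)) (at x)"
    by (auto intro!: derivative_eq_intros simp: mult.commute)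
  then show ?thesis
    unfolding foellmer_drift_def by (rule grad_eqI)
qed

lemma norm_foellmer_drift_le: "norm (foellmer_drift f x t) \<le> K / c"
proof -
  let ?V = "\<integral>z. f' (x + sqrt (1 - t) *\<^sub>R z) \<partial>std_gaussian"
  have heat: "c \<le> heat_sg (1 - t) f x"
    by (rule heat_sg_ge[OF f_lip f_ge])
  then have "norm (foellmer_drift f x t) = norm ?V / heat_sg (1 - t) f x"
    using c_pos by (simp add: foellmer_drift_eq divide_inverse mult.commute)
  also have "\<dots> \<le> K / c"
    using heat c_pos lipschitz_on_nonneg[OF f_lip] norm_gaussian_average_gradient_le[OF f' f_lip f'_lip]
    by (intro frac_le) auto
  finally show ?thesis .
qed

lemma lipschitz_on_foellmer_drift:
  "(L / c + K\<^sup>2 / c\<^sup>2)-lipschitz_on UNIV (\<lambda>x. foellmer_drift f x t)"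
proof -
  have "(L / c + K * K / c\<^sup>2)-lipschitz_on UNIV
      (\<lambda>x. inverse (heat_sg (1 - t) f x) *\<^sub>R (\<integral>z. f' (x + sqrt (1 - t) *\<^sub>R z) \<partial>std_gaussian))"
  proof (rule lipschitz_on_inverse_scaleR)
    show "K-lipschitz_on UNIV (heat_sg (1 - t) f)"
      unfolding heat_sg_def[abs_def] by (rule lipschitz_on_gaussian_average[OF f_lip])
    show "L-lipschitz_on UNIV (\<lambda>x. \<integral>z. f' (x + sqrt (1 - t) *\<^sub>R z) \<partial>std_gaussian)"
      by (rule lipschitz_on_gaussian_average[OF f'_lip])
  qed (use c_pos heat_sg_ge[OF f_lip f_ge] lipschitz_on_nonneg[OF f_lip]
         norm_gaussian_average_gradient_le[OF f' f_lip f'_lip] in auto)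
  then show ?thesis
    by (simp add: foellmer_drift_eq power2_eq_square)
qed

end

theorem lemma2:
  fixes f :: "'a::euclidean_space \<Rightarrow> real" and f' :: "'a \<Rightarrow> 'a"
    and L1 L2 c :: real
  assumes deriv: "\<And>x. (f has_derivative (\<lambda>h. f' x \<bullet> h)) (at x)"
    and lip_f: "L1-lipschitz_on UNIV f"
    and lip_grad: "L2-lipschitz_on UNIV f'"
    and c_pos: "0 < c" and c_le: "c \<le> 1"
    and lower: "\<And>x. c \<le> f x"
  shows "(\<forall>x t. t \<in> {0..1} \<longrightarrow> norm (foellmer_drift f x t) \<le> max L1 L2 / c)
       \<and> (\<forall>x x' t. t \<in> {0..1} \<longrightarrow>
           norm (foellmer_drift f x t - foellmer_drift f x' t)
             \<le> (max L1 L2 / c + (max L1 L2)^2 / c^2) * norm (x - x'))"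
proof -
  \<comment> \<open>Neither \<open>t \<in> {0..1}\<close> nor \<open>c \<le> 1\<close> is needed: \<open>sqrt (1 - t)\<close> only enters as a scale.\<close>
  note drift_facts = deriv lip_f lip_grad c_pos lower
  have L1: "0 \<le> L1"
    using lip_f by (rule lipschitz_on_nonneg)
  have "norm (foellmer_drift f x t) \<le> max L1 L2 / c" for x t
    using c_pos by (intro order_trans[OF norm_foellmer_drift_le[OF drift_facts]] divide_right_mono) auto
  moreover have "(max L1 L2 / c + (max L1 L2)^2 / c^2)-lipschitz_on UNIV (\<lambda>x. foellmer_drift f x t)" for t
  proof (rule lipschitz_on_le[OF lipschitz_on_foellmer_drift[OF drift_facts]])
    show "L2 / c + L1\<^sup>2 / c\<^sup>2 \<le> max L1 L2 / c + (max L1 L2)\<^sup>2 / c\<^sup>2"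
      using L1 c_pos by (intro add_mono divide_right_mono power_mono) auto
  qed
  ultimately show ?thesis
    using lipschitz_on_normD by fastforce
qed

end
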